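(* The $\Bbbk$-linear monoidal functor $\mathcal{AW}\to\mathcal{AS}$ which is the identity on generating objects $a\ge1$ and sends the generating morphisms $M_{a,b},S_{a,b},X_{a,b},\omega_a$ of $\mathcal{AW}$ to the morphisms with the same names in $\mathcal{AS}$ is faithful and full; that is, $\mathcal{AW}$ is a full subcategory of $\mathcal{AS}$.
   Context: Let $\Bbbk$ be a commutative ring with $1$. The affine Schur category $\mathcal{AS}$ is the strict $\Bbbk$-linear monoidal category defined as follows. Generating objects: the integers $a\ge1$ (black strands of thickness $a$) and the elements $u\in\Bbbk$ (red strands labelled $u$); objects are finite words in these, tensor product being concatenation. Generating morphisms, for $a,b\ge1$, $u\in\Bbbk$: merge $M_{a,b}:(a,b)\to(a+b)$, split $S_{a,b}:(a+b)\to(a,b)$, crossing $X_{a,b}:(a,b)\to(b,a)$, dot $\omega_a:(a)\to(a)$, traverse-up $U_{a,u}:(a,u)\to(u,a)$, traverse-down $D_{u,a}:(u,a)\to(a,u)$. Conventions: a black strand of thickness $0$ is the unit object and any merge, split or crossing involving a thickness-$0$ strand is an identity. Derived morphisms: $\omega_{a,0}:=1_a$; $\omega_{a,r}:=M_{r,a-r}(\omega_r\otimes1_{a-r})S_{r,a-r}$ for $1\le r\le a$; $\omega_{a,r}:=0$ if $r<0$ or $r>a$; $S^{(a)},M^{(a)}$ iterated splits/merges between $(a)$ and $(1,\dots,1)$; $g_r(u):=\sum_{i=0}^{r}(-1)^i\big(\prod_{j=0}^{i-1}(u+j)\big)\omega_{r,r-i}$. Defining relations, for all $a,b,c,d,r\ge1$,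 $u\in\Bbbk$: (R1) $M_{a+b,c}(M_{a,b}\otimes1_c)=M_{a,b+c}(1_a\otimes M_{b,c})$, $(S_{a,b}\otimes1_c)S_{a+b,c}=(1_a\otimes S_{b,c})S_{a,b+c}$; (R2) if $a+c=b+d$: $S_{b,d}M_{a,c}=\sum(M_{s,c-t}\otimes M_{a-s,t})(1_s\otimes X_{a-s,c-t}\otimes1_t)(S_{s,a-s}\otimes S_{c-t,t})$ over $0\le s\le\min(a,b)$, $0\le t\le\min(c,d)$, $t-s=d-a$; (R3) $M_{a,b}S_{a,b}=\binom{a+b}{a}1_{a+b}$; (R4) $(\omega_b\otimes1_a)X_{a,b}=\sum_{t=0}^{\min(a,b)}t!\,(M_{t,b-t}\otimes M_{a-t,t})(1_t\otimes X_{a-t,b-t}\otimes1_t)(1_t\otimes1_{a-t}\otimes\omega_{b-t}\otimes1_t)(S_{t,a-t}\otimes S_{b-t,t})$ and $X_{b,a}(\omega_b\otimes1_a)=\sum_{t=0}^{\min(a,b)}t!\,(M_{t,a-t}\otimes M_{b-t,t})(1_t\otimes1_{a-t}\otimes\omega_{b-t}\otimes1_t)(1_t\otimes X_{b-t,a-t}\otimes1_t)(S_{t,b-t}\otimes S_{a-t,t})$; (R5) $S_{a,b}\omega_{a+b}=(\omega_a\otimes\omega_b)S_{a,b}$, $\omega_{a+b}M_{a,b}=M_{a,b}(\omega_a\otimes\omega_b)$; (R6) $M^{(a)}(\omega_1\otimes\cdots\otimes\omega_1)S^{(a)}=a!\,\omega_a$; (R7) $D_{u,r}U_{r,u}=g_r(u)\otimes1_u$,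 $U_{r,u}D_{u,r}=1_u\otimes g_r(u)$; (R8) $(D_{u,b}\otimes1_a)(1_u\otimes X_{a,b})(U_{a,u}\otimes1_b)=(1_b\otimes U_{a,u})(X_{a,b}\otimes1_u)(1_a\otimes D_{u,b})+\sum_{t=1}^{\min(a,b)}t!\,(M_{t,b-t}\otimes1_u\otimes M_{a-t,t})(1_t\otimes1_{b-t}\otimes U_{a-t,u}\otimes1_t)(1_t\otimes X_{a-t,b-t}\otimes1_u\otimes1_t)(1_t\otimes1_{a-t}\otimes D_{u,b-t}\otimes1_t)(S_{t,a-t}\otimes1_u\otimes S_{b-t,t})$; (R9) $(1_u\otimes S_{b,c})U_{b+c,u}=(U_{b,u}\otimes1_c)(1_b\otimes U_{c,u})(S_{b,c}\otimes1_u)$, $(S_{a,b}\otimes1_u)D_{u,a+b}=(1_a\otimes D_{u,b})(D_{u,a}\otimes1_b)(1_u\otimes S_{a,b})$, $D_{u,b+c}(1_u\otimes M_{b,c})=(M_{b,c}\otimes1_u)(1_b\otimes D_{u,c})(D_{u,b}\otimes1_c)$, $U_{a+b,u}(M_{a,b}\otimes1_u)=(1_u\otimes M_{a,b})(U_{a,u}\otimes1_b)(1_a\otimes U_{b,u})$. The affine web category $\mathcal{AW}$ is the strict $\Bbbk$-linear monoidal category with generating objects the integers $a\ge1$ only, generating morphisms $M_{a,b},S_{a,b},X_{a,b},\omega_a$ ($a,b\ge1$), and defining relations (R1)–(R6). *)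

theory Defs
  imports Main
begin

section \<open>Free k-linear strict monoidal categories given by generators and relations\<close>

text \<open>Generating objects: black strands of thickness a (a >= 1) and red strands labelled u.\<close>
datatype 'k ob = Blk nat | Red 'k

text \<open>Generating morphisms (the parameters are required to be >= 1 by the well-formedness
  predicates below).\<close>
datatype 'k gen = Mrg nat nat | Spl nat nat | Crs nat nat | Dot nat | Up nat 'k | Dn 'k nat

fun gdom :: "'k gen \<Rightarrow> 'k ob list" where
  "gdom (Mrg a b) = [Blk a, Blk b]"
| "gdom (Spl a b) = [Blk (a + b)]"
| "gdom (Crs a b) = [Blk a, Blk b]"
| "gdom (Dot a) = [Blk a]"
| "gdom (Up a u) = [Blk a, Red u]"
| "gdom (Dn u a) = [Red u, Blk a]"

fun gcod :: "'k gen \<Rightarrow> 'k ob list" where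
  "gcod (Mrg a b) = [Blk (a + b)]"
| "gcod (Spl a b) = [Blk a, Blk b]"
| "gcod (Crs a b) = [Blk b, Blk a]"
| "gcod (Dot a) = [Blk a]"
| "gcod (Up a u) = [Red u, Blk a]"
| "gcod (Dn u a) = [Blk a, Red u]"

text \<open>Formal terms: identities, generators, composition (Comp f g = f after g), tensor
  product, zero, sum and scalar multiple.\<close>
datatype 'k tm = Idt "'k ob list" | Gn "'k gen" | Comp "'k tm" "'k tm" | Tens "'k tm" "'k tm"
  | Zer "'k ob list" "'k ob list" | Add "'k tm" "'k tm" | Scal 'k "'k tm"

fun tdom :: "'k tm \<Rightarrow> 'k ob list" and tcod :: "'k tm \<Rightarrow> 'k ob list" where
  "tdom (Idt a) = a"
| "tdom (Gn g) = gdom g"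
| "tdom (Comp f g) = tdom g"
| "tdom (Tens f g) = tdom f @ tdom g"
| "tdom (Zer d c) = d"
| "tdom (Add f g) = tdom f"
| "tdom (Scal k f) = tdom f"
| "tcod (Idt a) = a"
| "tcod (Gn g) = gcod g"
| "tcod (Comp f g) = tcod f"
| "tcod (Tens f g) = tcod f @ tcod g"
| "tcod (Zer d c) = c"
| "tcod (Add f g) = tcod f"
| "tcod (Scal k f) = tcod f"

fun wft :: "('k ob \<Rightarrow> bool) \<Rightarrow> ('k gen \<Rightarrow> bool) \<Rightarrow> 'k tm \<Rightarrow> bool" where
  "wft P Q (Idt a) = list_all P a"
| "wft P Q (Gn g) = Q g"
| "wft P Q (Comp f g) = (wft P Q f \<and> wft P Q g \<and> tdom f = tcod g)"
| "wft P Q (Tens f g) = (wft P Q f \<and> wft P Q g)"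
| "wft P Q (Zer d c) = (list_all P d \<and> list_all P c)"
| "wft P Q (Add f g) = (wft P Q f \<and> wft P Q g \<and> tdom f = tdom g \<and> tcod f = tcod g)"
| "wft P Q (Scal k f) = wft P Q f"

text \<open>The congruence generated by the axioms of a strict k-linear monoidal category and by
  a set R of defining relations: two well-formed terms are equal as morphisms of the
  presented category iff they are related by eqv.\<close>
inductive eqv :: "('k::comm_ring_1 ob \<Rightarrow> bool) \<Rightarrow> ('k gen \<Rightarrow> bool) \<Rightarrow> ('k tm \<times> 'k tm) set
    \<Rightarrow> 'k tm \<Rightarrow> 'k tm \<Rightarrow> bool" for P Q R where
  refl: "wft P Q f \<Longrightarrow> eqv P Q R f f"
| sym: "eqv P Q R f g \<Longrightarrow> eqv P Q R g f"
| trans: "eqv P Q R f g \<Longrightarrow> eqv P Q R g h \<Longrightarrow> eqv P Q R f h"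
| cong_comp: "eqv P Q R f f' \<Longrightarrow> eqv P Q R g g' \<Longrightarrow> tdom f = tcod g
    \<Longrightarrow> eqv P Q R (Comp f g) (Comp f' g')"
| cong_tens: "eqv P Q R f f' \<Longrightarrow> eqv P Q R g g' \<Longrightarrow> eqv P Q R (Tens f g) (Tens f' g')"
| cong_add: "eqv P Q R f f' \<Longrightarrow> eqv P Q R g g' \<Longrightarrow> tdom f = tdom g \<Longrightarrow> tcod f = tcod g
    \<Longrightarrow> eqv P Q R (Add f g) (Add f' g')"
| cong_scal: "eqv P Q R f f' \<Longrightarrow> eqv P Q R (Scal c f) (Scal c f')"
| comp_assoc: "wft P Q f \<Longrightarrow> wft P Q g \<Longrightarrow> wft P Q h \<Longrightarrow> tdom f = tcod g \<Longrightarrow> tdom g = tcod h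
    \<Longrightarrow> eqv P Q R (Comp (Comp f g) h) (Comp f (Comp g h))"
| comp_id_l: "wft P Q f \<Longrightarrow> eqv P Q R (Comp (Idt (tcod f)) f) f"
| comp_id_r: "wft P Q f \<Longrightarrow> eqv P Q R (Comp f (Idt (tdom f))) f"
| tens_assoc: "wft P Q f \<Longrightarrow> wft P Q g \<Longrightarrow> wft P Q h
    \<Longrightarrow> eqv P Q R (Tens (Tens f g) h) (Tens f (Tens g h))"
| tens_unit_l: "wft P Q f \<Longrightarrow> eqv P Q R (Tens (Idt []) f) f"
| tens_unit_r: "wft P Q f \<Longrightarrow> eqv P Q R (Tens f (Idt [])) f"
| tens_id: "list_all P a \<Longrightarrow> list_all P b \<Longrightarrow> eqv P Q R (Tens (Idt a) (Idt b)) (Idt (a @ b))"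
| interchange: "wft P Q f \<Longrightarrow> wft P Q f' \<Longrightarrow> wft P Q g \<Longrightarrow> wft P Q g'
    \<Longrightarrow> tdom f = tcod f' \<Longrightarrow> tdom g = tcod g'
    \<Longrightarrow> eqv P Q R (Comp (Tens f g) (Tens f' g')) (Tens (Comp f f') (Comp g g'))"
| add_assoc: "wft P Q (Add (Add f g) h) \<Longrightarrow> eqv P Q R (Add (Add f g) h) (Add f (Add g h))"
| add_comm: "wft P Q (Add f g) \<Longrightarrow> eqv P Q R (Add f g) (Add g f)"
| add_zero: "wft P Q f \<Longrightarrow> eqv P Q R (Add f (Zer (tdom f) (tcod f))) f"
| scal_one: "wft P Q f \<Longrightarrow> eqv P Q R (Scal 1 f) f"
| scal_zero: "wft P Q f \<Longrightarrow> eqv P Q R (Scal 0 f) (Zer (tdom f) (tcod f))"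
| scal_scal: "wft P Q f \<Longrightarrow> eqv P Q R (Scal a (Scal b f)) (Scal (a * b) f)"
| scal_add_l: "wft P Q f \<Longrightarrow> eqv P Q R (Scal (a + b) f) (Add (Scal a f) (Scal b f))"
| scal_add_r: "wft P Q (Add f g) \<Longrightarrow> eqv P Q R (Scal a (Add f g)) (Add (Scal a f) (Scal a g))"
| comp_add_l: "wft P Q (Comp (Add f g) h) \<Longrightarrow> eqv P Q R (Comp (Add f g) h) (Add (Comp f h) (Comp g h))"
| comp_add_r: "wft P Q (Comp h (Add f g)) \<Longrightarrow> eqv P Q R (Comp h (Add f g)) (Add (Comp h f) (Comp h g))"
| comp_scal_l: "wft P Q (Comp f g) \<Longrightarrow> eqv P Q R (Comp (Scal c f) g) (Scal c (Comp f g))"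
| comp_scal_r: "wft P Q (Comp f g) \<Longrightarrow> eqv P Q R (Comp f (Scal c g)) (Scal c (Comp f g))"
| tens_add_l: "wft P Q (Tens (Add f g) h) \<Longrightarrow> eqv P Q R (Tens (Add f g) h) (Add (Tens f h) (Tens g h))"
| tens_add_r: "wft P Q (Tens h (Add f g)) \<Longrightarrow> eqv P Q R (Tens h (Add f g)) (Add (Tens h f) (Tens h g))"
| tens_scal_l: "wft P Q (Tens f g) \<Longrightarrow> eqv P Q R (Tens (Scal c f) g) (Scal c (Tens f g))"
| tens_scal_r: "wft P Q (Tens f g) \<Longrightarrow> eqv P Q R (Tens f (Scal c g)) (Scal c (Tens f g))"
| rel: "(f, g) \<in> R \<Longrightarrow> wft P Q f \<Longrightarrow> wft P Q g \<Longrightarrow> tdom f = tdom g \<Longrightarrow> tcod f = tcod g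
    \<Longrightarrow> eqv P Q R f g"

fun ASob :: "'k ob \<Rightarrow> bool" where
  "ASob (Blk a) = (a \<ge> 1)"
| "ASob (Red u) = True"

fun AWob :: "'k ob \<Rightarrow> bool" where
  "AWob (Blk a) = (a \<ge> 1)"
| "AWob (Red u) = False"

fun ASgen :: "'k gen \<Rightarrow> bool" where
  "ASgen (Mrg a b) = (a \<ge> 1 \<and> b \<ge> 1)"
| "ASgen (Spl a b) = (a \<ge> 1 \<and> b \<ge> 1)"
| "ASgen (Crs a b) = (a \<ge> 1 \<and> b \<ge> 1)"
| "ASgen (Dot a) = (a \<ge> 1)"
| "ASgen (Up a u) = (a \<ge> 1)"
| "ASgen (Dn u a) = (a \<ge> 1)"

fun AWgen :: "'k gen \<Rightarrow> bool" where
  "AWgen (Mrg a b) = (a \<ge> 1 \<and> b \<ge> 1)"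
| "AWgen (Spl a b) = (a \<ge> 1 \<and> b \<ge> 1)"
| "AWgen (Crs a b) = (a \<ge> 1 \<and> b \<ge> 1)"
| "AWgen (Dot a) = (a \<ge> 1)"
| "AWgen (Up a u) = False"
| "AWgen (Dn u a) = False"

section \<open>Shorthands, with the thickness-0 conventions\<close>

definition blk :: "nat \<Rightarrow> 'k ob list" where
  "blk a = (if a = 0 then [] else [Blk a])"

definition idb :: "nat \<Rightarrow> 'k tm" where "idb a = Idt (blk a)"

definition idr :: "'k \<Rightarrow> 'k tm" where "idr u = Idt [Red u]"

definition mrg :: "nat \<Rightarrow> nat \<Rightarrow> 'k tm" where
  "mrg a b = (if a = 0 \<or> b = 0 then idb (a + b) else Gn (Mrg a b))"

definition spl :: "nat \<Rightarrow> nat \<Rightarrow> 'k tm" where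
  "spl a b = (if a = 0 \<or> b = 0 then idb (a + b) else Gn (Spl a b))"

definition crs :: "nat \<Rightarrow> nat \<Rightarrow> 'k tm" where
  "crs a b = (if a = 0 \<or> b = 0 then Idt (blk a @ blk b) else Gn (Crs a b))"

definition dot :: "nat \<Rightarrow> 'k tm" where
  "dot a = (if a = 0 then Idt [] else Gn (Dot a))"

definition trU :: "nat \<Rightarrow> 'k \<Rightarrow> 'k tm" where
  "trU a u = (if a = 0 then idr u else Gn (Up a u))"

definition trD :: "'k \<Rightarrow> nat \<Rightarrow> 'k tm" where
  "trD u a = (if a = 0 then idr u else Gn (Dn u a))"

definition tsum :: "'k ob list \<Rightarrow> 'k ob list \<Rightarrow> 'k tm list \<Rightarrow> 'k tm" where
  "tsum d c fs = foldr Add fs (Zer d c)"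

text \<open>tcomps [f1, ..., fn] = f1 after ... after fn (n >= 1).\<close>
fun tcomps :: "'k tm list \<Rightarrow> 'k tm" where
  "tcomps [] = Idt []"
| "tcomps [f] = f"
| "tcomps (f # g # fs) = Comp f (tcomps (g # fs))"

definition omega :: "nat \<Rightarrow> nat \<Rightarrow> 'k tm" where
  "omega a r = (if r = 0 then idb a else if a < r then Zer (blk a) (blk a)
     else Comp (mrg r (a - r)) (Comp (Tens (dot r) (idb (a - r))) (spl r (a - r))))"

fun spl_it :: "nat \<Rightarrow> 'k tm" where
  "spl_it 0 = Idt []"
| "spl_it (Suc n) = Comp (Tens (idb 1) (spl_it n)) (spl 1 n)"

fun mrg_it :: "nat \<Rightarrow> 'k tm" where
  "mrg_it 0 = Idt []"
| "mrg_it (Suc n) = Comp (mrg 1 n) (Tens (idb 1) (mrg_it n))"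

fun dots :: "nat \<Rightarrow> 'k tm" where
  "dots 0 = Idt []"
| "dots (Suc n) = Tens (dot 1) (dots n)"

definition gpol :: "nat \<Rightarrow> 'k::comm_ring_1 \<Rightarrow> 'k tm" where
  "gpol r u = tsum (blk r) (blk r)
     [Scal ((-1) ^ i * (\<Prod>j<i. u + of_nat j)) (omega r (r - i)). i \<leftarrow> [0..<Suc r]]"

definition R1 :: "nat \<Rightarrow> nat \<Rightarrow> nat \<Rightarrow> ('k tm \<times> 'k tm) list" where
  "R1 a b c =
    [(Comp (mrg (a + b) c) (Tens (mrg a b) (idb c)), Comp (mrg a (b + c)) (Tens (idb a) (mrg b c))),
     (Comp (Tens (spl a b) (idb c)) (spl (a + b) c), Comp (Tens (idb a) (spl b c)) (spl a (b + c)))]"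

definition R2 :: "nat \<Rightarrow> nat \<Rightarrow> nat \<Rightarrow> nat \<Rightarrow> ('k tm \<times> 'k tm) list" where
  "R2 a b c d =
    [(Comp (spl b d) (mrg a c),
      tsum [Blk a, Blk c] [Blk b, Blk d]
        [tcomps [Tens (mrg s (c - t)) (mrg (a - s) t),
                 Tens (idb s) (Tens (crs (a - s) (c - t)) (idb t)),
                 Tens (spl s (a - s)) (spl (c - t) t)].
          s \<leftarrow> [0..<Suc (min a b)], t \<leftarrow> [0..<Suc (min c d)], int t - int s = int d - int a])]"

definition R3 :: "nat \<Rightarrow> nat \<Rightarrow> ('k::comm_ring_1 tm \<times> 'k tm) list" where
  "R3 a b = [(Comp (mrg a b) (spl a b), Scal (of_nat ((a + b) choose a)) (idb (a + b)))]"

definition R4 :: "nat \<Rightarrow> nat \<Rightarrow> ('k::comm_ring_1 tm \<times> 'k tm) list" where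
  "R4 a b =
    [(Comp (Tens (dot b) (idb a)) (crs a b),
      tsum [Blk a, Blk b] [Blk b, Blk a]
        [Scal (of_nat (fact t)) (tcomps
           [Tens (mrg t (b - t)) (mrg (a - t) t),
            Tens (idb t) (Tens (crs (a - t) (b - t)) (idb t)),
            Tens (idb t) (Tens (idb (a - t)) (Tens (dot (b - t)) (idb t))),
            Tens (spl t (a - t)) (spl (b - t) t)]). t \<leftarrow> [0..<Suc (min a b)]]),
     (Comp (crs b a) (Tens (dot b) (idb a)),
      tsum [Blk b, Blk a] [Blk a, Blk b]
        [Scal (of_nat (fact t)) (tcomps
           [Tens (mrg t (a - t)) (mrg (b - t) t),
            Tens (idb t) (Tens (idb (a - t)) (Tens (dot (b - t)) (idb t))),
            Tens (idb t) (Tens (crs (b - t) (a - t)) (idb t)),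
            Tens (spl t (b - t)) (spl (a - t) t)]). t \<leftarrow> [0..<Suc (min a b)]])]"

definition R5 :: "nat \<Rightarrow> nat \<Rightarrow> ('k tm \<times> 'k tm) list" where
  "R5 a b =
    [(Comp (spl a b) (dot (a + b)), Comp (Tens (dot a) (dot b)) (spl a b)),
     (Comp (dot (a + b)) (mrg a b), Comp (mrg a b) (Tens (dot a) (dot b)))]"

definition R6 :: "nat \<Rightarrow> ('k::comm_ring_1 tm \<times> 'k tm) list" where
  "R6 a = [(tcomps [mrg_it a, dots a, spl_it a], Scal (of_nat (fact a)) (dot a))]"

definition R7 :: "nat \<Rightarrow> 'k::comm_ring_1 \<Rightarrow> ('k tm \<times> 'k tm) list" where
  "R7 r u =
    [(Comp (trD u r) (trU r u), Tens (gpol r u) (idr u)),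
     (Comp (trU r u) (trD u r), Tens (idr u) (gpol r u))]"

definition R8 :: "nat \<Rightarrow> nat \<Rightarrow> 'k::comm_ring_1 \<Rightarrow> ('k tm \<times> 'k tm) list" where
  "R8 a b u =
    [(tcomps [Tens (trD u b) (idb a), Tens (idr u) (crs a b), Tens (trU a u) (idb b)],
      Add (tcomps [Tens (idb b) (trU a u), Tens (crs a b) (idr u), Tens (idb a) (trD u b)])
       (tsum [Blk a, Red u, Blk b] [Blk b, Red u, Blk a]
         [Scal (of_nat (fact t)) (tcomps
           [Tens (mrg t (b - t)) (Tens (idr u) (mrg (a - t) t)),
            Tens (idb t) (Tens (idb (b - t)) (Tens (trU (a - t) u) (idb t))),
            Tens (idb t) (Tens (crs (a - t) (b - t)) (Tens (idr u) (idb t))),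
            Tens (idb t) (Tens (idb (a - t)) (Tens (trD u (b - t)) (idb t))),
            Tens (spl t (a - t)) (Tens (idr u) (spl (b - t) t))]). t \<leftarrow> [1..<Suc (min a b)]]))]"

definition R9 :: "nat \<Rightarrow> nat \<Rightarrow> 'k \<Rightarrow> ('k tm \<times> 'k tm) list" where
  "R9 b c u =
    [(Comp (Tens (idr u) (spl b c)) (trU (b + c) u),
      tcomps [Tens (trU b u) (idb c), Tens (idb b) (trU c u), Tens (spl b c) (idr u)]),
     (Comp (Tens (spl b c) (idr u)) (trD u (b + c)),
      tcomps [Tens (idb b) (trD u c), Tens (trD u b) (idb c), Tens (idr u) (spl b c)]),
     (Comp (trD u (b + c)) (Tens (idr u) (mrg b c)),
      tcomps [Tens (mrg b c) (idr u), Tens (idb b) (trD u c), Tens (trD u b) (idb c)]),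
     (Comp (trU (b + c) u) (Tens (mrg b c) (idr u)),
      tcomps [Tens (idr u) (mrg b c), Tens (trU b u) (idb c), Tens (idb b) (trU c u)])]"

definition AW_rels :: "('k::comm_ring_1 tm \<times> 'k tm) set" where
  "AW_rels = {p. \<exists>a b c d. a \<ge> 1 \<and> b \<ge> 1 \<and> c \<ge> 1 \<and> d \<ge> 1 \<and>
      (p \<in> set (R1 a b c) \<or> (a + c = b + d \<and> p \<in> set (R2 a b c d)) \<or> p \<in> set (R3 a b)
       \<or> p \<in> set (R4 a b) \<or> p \<in> set (R5 a b) \<or> p \<in> set (R6 a))}"

definition AS_rels :: "('k::comm_ring_1 tm \<times> 'k tm) set" where
  "AS_rels = AW_rels \<union> {p. \<exists>a b u. a \<ge> 1 \<and> b \<ge> 1 \<and>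
      (p \<in> set (R7 a u) \<or> p \<in> set (R8 a b u) \<or> p \<in> set (R9 a b u))}"

text \<open>Morphisms of AW (resp. AS) from x to y: well-formed terms over AWob/AWgen
  (resp. ASob/ASgen) with domain x and codomain y, modulo eqv AWob AWgen AW_rels
  (resp. eqv ASob ASgen AS_rels).\<close>

abbreviation AW_eq :: "'k::comm_ring_1 tm \<Rightarrow> 'k tm \<Rightarrow> bool" where
  "AW_eq \<equiv> eqv AWob AWgen AW_rels"

abbreviation AS_eq :: "'k::comm_ring_1 tm \<Rightarrow> 'k tm \<Rightarrow> bool" where
  "AS_eq \<equiv> eqv ASob ASgen AS_rels"

end

theory Submission
  imports Defs
begin

(* Red strands can neither begin nor end: every generator of AS has as many red strands at
   the bottom as at the top, so a morphism whose domain and codomain differ in their number of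
   red strands is zero. Erasing red strands, i.e. replacing every identity and generator that
   touches a red strand by the zero morphism between the black parts, therefore sends AS-terms
   to AW-terms and respects the relations: R7-R9 have red strands at their ends and go to
   0 = 0, and a composite through an object with red strands is zero on both sides.
   Erasure fixes AW-terms, which gives faithfulness; a black-to-black AS-term equals its
   erasure in AS, which gives fullness. *)

fun is_black :: "'k ob \<Rightarrow> bool" where
  "is_black (Blk a) \<longleftrightarrow> True"
| "is_black (Red u) \<longleftrightarrow> False"

definition red_count :: "'k ob list \<Rightarrow> nat" where
  "red_count xs = length [x \<leftarrow> xs. \<not> is_black x]"

lemma red_count_append [simp]: "red_count (xs @ ys) = red_count xs + red_count ys"
  by (simp add: red_count_def)

lemma red_count_eq_0_iff: "red_count xs = 0 \<longleftrightarrow> list_all is_black xs"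
  by (auto simp: red_count_def list_all_iff filter_empty_conv)

lemma red_count_gdom_gcod: "red_count (gdom g) = red_count (gcod g)"
  by (cases g) (simp_all add: red_count_def)

lemma AWob_iff: "AWob x \<longleftrightarrow> ASob x \<and> is_black x"
  by (cases x) simp_all

lemma list_all_AWob_iff [simp]: "list_all AWob xs \<longleftrightarrow> list_all ASob xs \<and> list_all is_black xs"
  by (auto simp: list_all_iff AWob_iff)

lemma list_all_filter [simp]: "list_all P xs \<Longrightarrow> list_all P (filter Q xs)"
  by (simp add: list_all_iff)

lemma list_all_is_black_filter [simp]: "list_all is_black (filter is_black xs)"
  by (simp add: list_all_iff)

lemma AWob_imp_ASob: "AWob x \<Longrightarrow> ASob x"
  by (simp add: AWob_iff)

lemma AWgen_imp_ASgen: "AWgen g \<Longrightarrow> ASgen g"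
  by (cases g) simp_all

lemma AW_rels_subset_AS_rels: "AW_rels \<subseteq> AS_rels"
  by (auto simp: AS_rels_def)

lemma wft_mono:
  assumes "wft P Q f" "\<And>x. P x \<Longrightarrow> P' x" "\<And>g. Q g \<Longrightarrow> Q' g"
  shows "wft P' Q' f"
  using assms(1) by (induction f) (auto simp: list_all_iff intro: assms(2,3))

lemma eqv_mono:
  assumes "eqv P Q R f g" "\<And>x. P x \<Longrightarrow> P' x" "\<And>g. Q g \<Longrightarrow> Q' g" "R \<subseteq> R'"
  shows "eqv P' Q' R' f g"
  using assms(1)
  by (induction rule: eqv.induct)
    (auto intro: eqv.intros wft_mono[OF _ assms(2,3)] simp: list_all_iff assms(2)
      dest!: subsetD[OF assms(4)] simp del: wft.simps)

declare eqv.trans [trans]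

locale presentation =
  fixes P :: "'k::comm_ring_1 ob \<Rightarrow> bool" and Q :: "'k gen \<Rightarrow> bool"
    and R :: "('k tm \<times> 'k tm) set"
  assumes gen_typed: "Q g \<Longrightarrow> list_all P (gdom g) \<and> list_all P (gcod g)"
begin

abbreviation eq :: "'k tm \<Rightarrow> 'k tm \<Rightarrow> bool" where
  "eq \<equiv> eqv P Q R"

lemma wft_typed: "wft P Q f \<Longrightarrow> list_all P (tdom f) \<and> list_all P (tcod f)"
  by (induction f) (auto dest: gen_typed)

lemma eqv_wft: "eq f g \<Longrightarrow> wft P Q f \<and> wft P Q g \<and> tdom f = tdom g \<and> tcod f = tcod g"
  by (induction rule: eqv.induct) (auto dest: wft_typed)

lemma eq_zero_imp_eq_scal_zero:
  assumes "eq f (Zer d c)"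
  shows "eq f (Scal 0 (Zer d c))"
proof -
  have "wft P Q (Zer d c)" using eqv_wft[OF assms] by blast
  then have "eq (Zer d c) (Scal 0 (Zer d c))"
    using eqv.scal_zero[of P Q "Zer d c" R] by (auto intro: eqv.sym)
  with assms show ?thesis ..
qed

lemma comp_zero_left:
  assumes f: "eq f (Zer m c)" and x: "wft P Q x" "tcod x = m"
  shows "eq (Comp f x) (Zer (tdom x) c)"
proof -
  note types = eqv_wft[OF f]
  have "eq (Comp f x) (Comp (Scal 0 (Zer m c)) x)"
    using eq_zero_imp_eq_scal_zero[OF f] x types by (auto intro: eqv.cong_comp eqv.refl)
  also have "eq \<dots> (Scal 0 (Comp (Zer m c) x))"
    using types x by (intro eqv.comp_scal_l) auto
  also have "eq \<dots> (Zer (tdom x) c)"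
    using eqv.scal_zero[of P Q "Comp (Zer m c) x" R] types x by auto
  finally show ?thesis .
qed

lemma comp_zero_right:
  assumes f: "eq f (Zer d m)" and x: "wft P Q x" "tdom x = m"
  shows "eq (Comp x f) (Zer d (tcod x))"
proof -
  note types = eqv_wft[OF f]
  have "eq (Comp x f) (Comp x (Scal 0 (Zer d m)))"
    using eq_zero_imp_eq_scal_zero[OF f] x types by (auto intro: eqv.cong_comp eqv.refl)
  also have "eq \<dots> (Scal 0 (Comp x (Zer d m)))"
    using types x by (intro eqv.comp_scal_r) auto
  also have "eq \<dots> (Zer d (tcod x))"
    using eqv.scal_zero[of P Q "Comp x (Zer d m)" R] types x by auto
  finally show ?thesis .
qed

lemma tens_zero_left:
  assumes f: "eq f (Zer d c)" and x: "wft P Q x"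
  shows "eq (Tens f x) (Zer (d @ tdom x) (c @ tcod x))"
proof -
  note types = eqv_wft[OF f]
  have "eq (Tens f x) (Tens (Scal 0 (Zer d c)) x)"
    using eq_zero_imp_eq_scal_zero[OF f] x by (auto intro: eqv.cong_tens eqv.refl)
  also have "eq \<dots> (Scal 0 (Tens (Zer d c) x))"
    using types x by (intro eqv.tens_scal_l) auto
  also have "eq \<dots> (Zer (d @ tdom x) (c @ tcod x))"
    using eqv.scal_zero[of P Q "Tens (Zer d c) x" R] types x by auto
  finally show ?thesis .
qed

lemma tens_zero_right:
  assumes f: "eq f (Zer d c)" and x: "wft P Q x"
  shows "eq (Tens x f) (Zer (tdom x @ d) (tcod x @ c))"
proof -
  note types = eqv_wft[OF f]
  have "eq (Tens x f) (Tens x (Scal 0 (Zer d c)))"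
    using eq_zero_imp_eq_scal_zero[OF f] x by (auto intro: eqv.cong_tens eqv.refl)
  also have "eq \<dots> (Scal 0 (Tens x (Zer d c)))"
    using types x by (intro eqv.tens_scal_r) auto
  also have "eq \<dots> (Zer (tdom x @ d) (tcod x @ c))"
    using eqv.scal_zero[of P Q "Tens x (Zer d c)" R] types x by auto
  finally show ?thesis .
qed

lemma add_zero_zero:
  assumes f: "eq f (Zer d c)" and g: "eq g (Zer d c)"
  shows "eq (Add f g) (Zer d c)"
proof -
  note types = eqv_wft[OF f]
  have "eq (Add f g) (Add (Zer d c) (Zer d c))"
    using f g types eqv_wft[OF g] by (auto intro: eqv.cong_add)
  also have "eq \<dots> (Zer d c)"
    using eqv.add_zero[of P Q "Zer d c" R] types by auto
  finally show ?thesis .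
qed

lemma scal_zero_eq_zero:
  assumes f: "eq f (Zer d c)"
  shows "eq (Scal a f) (Zer d c)"
proof -
  note types = eqv_wft[OF f]
  have "eq (Scal a f) (Scal a (Scal 0 (Zer d c)))"
    using eq_zero_imp_eq_scal_zero[OF f] by (rule eqv.cong_scal)
  also have "eq \<dots> (Scal 0 (Zer d c))"
    using eqv.scal_scal[of P Q "Zer d c" R a 0] types by auto
  also have "eq \<dots> (Zer d c)"
    using eqv.scal_zero[of P Q "Zer d c" R] types by auto
  finally show ?thesis .
qed

lemma eq_zero_if_red_count_differs:
  assumes red_count_gen: "\<And>g. Q g \<Longrightarrow> red_count (gdom g) = red_count (gcod g)"
  shows "wft P Q h \<Longrightarrow> red_count (tdom h) \<noteq> red_count (tcod h)
    \<Longrightarrow> eq h (Zer (tdom h) (tcod h))"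
proof (induction h)
  case (Comp f g)
  then have f: "wft P Q f" and g: "wft P Q g" and fg: "tdom f = tcod g" by simp_all
  show ?case
  proof (cases "red_count (tdom f) = red_count (tcod f)")
    case True
    with Comp.prems fg have "red_count (tdom g) \<noteq> red_count (tcod g)" by simp
    with Comp.IH(2) g have "eq g (Zer (tdom g) (tcod g))" by blast
    with f fg show ?thesis using comp_zero_right by simp
  next
    case False
    with Comp.IH(1) f have "eq f (Zer (tdom f) (tcod f))" by blast
    with g fg show ?thesis using comp_zero_left by simp
  qed
next
  case (Tens f g)
  then have f: "wft P Q f" and g: "wft P Q g" by simp_all
  show ?case
  proof (cases "red_count (tdom f) = red_count (tcod f)")
    case True
    with Tens.prems have "red_count (tdom g) \<noteq> red_count (tcod g)" by simp
    with Tens.IH(2) g have "eq g (Zer (tdom g) (tcod g))" by blast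
    with f show ?thesis using tens_zero_right by simp
  next
    case False
    with Tens.IH(1) f have "eq f (Zer (tdom f) (tcod f))" by blast
    with g show ?thesis using tens_zero_left by simp
  qed
next
  case (Add f g)
  then have "eq f (Zer (tdom f) (tcod f))" "eq g (Zer (tdom f) (tcod f))" by simp_all
  then show ?case by (simp add: add_zero_zero)
next
  case (Scal a f)
  then show ?case by (simp add: scal_zero_eq_zero)
qed (simp_all add: eqv.refl red_count_gen)

end

interpretation AS: presentation "ASob :: 'k::comm_ring_1 ob \<Rightarrow> bool" ASgen AS_rels
proof
  show "ASgen g \<Longrightarrow> list_all ASob (gdom g) \<and> list_all ASob (gcod g)" for g :: "'k gen"
    by (cases g) simp_all
qed

interpretation AW: presentation "AWob :: 'k::comm_ring_1 ob \<Rightarrow> bool" AWgen AW_rels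
proof
  show "AWgen g \<Longrightarrow> list_all AWob (gdom g) \<and> list_all AWob (gcod g)" for g :: "'k gen"
    by (cases g) simp_all
qed

definition black_typed :: "'k tm \<Rightarrow> bool" where
  "black_typed f \<longleftrightarrow> list_all is_black (tdom f) \<and> list_all is_black (tcod f)"

lemma filter_is_black_id [simp]: "list_all is_black xs \<Longrightarrow> filter is_black xs = xs"
  by (simp add: list_all_iff)

fun erase_red :: "'k tm \<Rightarrow> 'k tm" where
  "erase_red (Idt a) =
    (if list_all is_black a then Idt a else Zer (filter is_black a) (filter is_black a))"
| "erase_red (Gn g) =
    (if black_typed (Gn g) then Gn g else Zer (filter is_black (gdom g)) (filter is_black (gcod g)))"
| "erase_red (Comp f g) = Comp (erase_red f) (erase_red g)"
| "erase_red (Tens f g) = Tens (erase_red f) (erase_red g)"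
| "erase_red (Zer d c) = Zer (filter is_black d) (filter is_black c)"
| "erase_red (Add f g) = Add (erase_red f) (erase_red g)"
| "erase_red (Scal k f) = Scal k (erase_red f)"

lemma tdom_erase_red [simp]: "tdom (erase_red h) = filter is_black (tdom h)"
  and tcod_erase_red [simp]: "tcod (erase_red h) = filter is_black (tcod h)"
  by (induction h) (auto simp: black_typed_def)

lemma wft_erase_red: "wft ASob ASgen h \<Longrightarrow> wft AWob AWgen (erase_red h)"
proof (induction h)
  case (Gn g)
  then show ?case by (cases g) (auto simp: black_typed_def)
qed auto

lemma erase_red_eq_zero:
  "wft ASob ASgen h \<Longrightarrow> \<not> black_typed h
    \<Longrightarrow> AW.eq (erase_red h) (Zer (filter is_black (tdom h)) (filter is_black (tcod h)))"
proof (induction h)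
  case (Comp f g)
  show ?case
  proof (cases "black_typed f")
    case False
    with Comp have "AW.eq (erase_red f) (Zer (filter is_black (tdom f)) (filter is_black (tcod f)))"
      by simp
    with Comp.prems AW.comp_zero_left[of "erase_red f" _ _ "erase_red g"] show ?thesis
      by (simp add: wft_erase_red)
  next
    case True
    with Comp.prems have "\<not> black_typed g" by (simp add: black_typed_def)
    with Comp have "AW.eq (erase_red g) (Zer (filter is_black (tdom g)) (filter is_black (tcod g)))"
      by simp
    with Comp.prems AW.comp_zero_right[of "erase_red g" _ _ "erase_red f"] show ?thesis
      by (simp add: wft_erase_red)
  qed
next
  case (Tens f g)
  show ?case
  proof (cases "black_typed f")
    case False
    with Tens have "AW.eq (erase_red f) (Zer (filter is_black (tdom f)) (filter is_black (tcod f)))"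
      by simp
    with Tens.prems AW.tens_zero_left[of "erase_red f" _ _ "erase_red g"] show ?thesis
      by (simp add: wft_erase_red)
  next
    case True
    with Tens.prems have "\<not> black_typed g" by (auto simp: black_typed_def)
    with Tens have "AW.eq (erase_red g) (Zer (filter is_black (tdom g)) (filter is_black (tcod g)))"
      by simp
    with Tens.prems AW.tens_zero_right[of "erase_red g" _ _ "erase_red f"] show ?thesis
      by (simp add: wft_erase_red)
  qed
next
  case (Add f g)
  then have "AW.eq (erase_red f) (Zer (filter is_black (tdom f)) (filter is_black (tcod f)))"
    "AW.eq (erase_red g) (Zer (filter is_black (tdom f)) (filter is_black (tcod f)))"
    by (simp_all add: black_typed_def)
  then show ?case by (simp add: AW.add_zero_zero)
next
  case (Scal a f)
  then show ?case by (simp add: black_typed_def AW.scal_zero_eq_zero)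
qed (auto simp: black_typed_def intro!: eqv.refl dest: AS.gen_typed)

lemma erase_red_comp_eq_zero:
  assumes "wft ASob ASgen (Comp f g)" "\<not> black_typed f"
  shows "AW.eq (erase_red (Comp f g)) (Zer (filter is_black (tdom g)) (filter is_black (tcod f)))"
proof -
  have "wft ASob ASgen f" using assms(1) by simp
  then have "AW.eq (erase_red f) (Zer (filter is_black (tdom f)) (filter is_black (tcod f)))"
    using assms(2) by (rule erase_red_eq_zero)
  with assms(1) AW.comp_zero_left[of "erase_red f" _ _ "erase_red g"] show ?thesis
    by (simp add: wft_erase_red)
qed

lemma erase_red_AW_id: "wft AWob AWgen f \<Longrightarrow> erase_red f = f"
proof (induction f)
  case (Gn g)
  then show ?case by (cases g) (simp_all add: black_typed_def)
qed simp_all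

lemma list_all_is_black_blk [simp]: "list_all is_black (blk a)"
  by (simp add: blk_def)

lemma erase_red_shorthands [simp]:
  "erase_red (idb a) = idb a" "erase_red (mrg a b) = mrg a b" "erase_red (spl a b) = spl a b"
  "erase_red (crs a b) = crs a b" "erase_red (dot a) = dot a"
  by (simp_all add: idb_def mrg_def spl_def crs_def dot_def black_typed_def blk_def)

lemma erase_red_tsum [simp]:
  "list_all is_black d \<Longrightarrow> list_all is_black c
    \<Longrightarrow> erase_red (tsum d c fs) = tsum d c (map erase_red fs)"
  by (induction fs) (simp_all add: tsum_def)

lemma erase_red_tcomps [simp]: "erase_red (tcomps fs) = tcomps (map erase_red fs)"
  by (induction fs rule: tcomps.induct) simp_all

lemma erase_red_iterated [simp]:
  "erase_red (mrg_it n) = mrg_it n" "erase_red (spl_it n) = spl_it n" "erase_red (dots n) = dots n"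
  by (induction n) simp_all

(* if_cong lets simp rewrite inside the guarded list comprehension of R2. *)
lemma erase_red_AW_rels_id: "(f, g) \<in> AW_rels \<Longrightarrow> erase_red f = f \<and> erase_red g = g"
  by (auto simp: AW_rels_def R1_def R2_def R3_def R4_def R5_def R6_def
      map_concat comp_def if_distrib[where f = "map erase_red"] cong: if_cong simp del: upt_Suc)

lemma AS_rels_black_typed_imp_AW_rels:
  "(f, g) \<in> AS_rels \<Longrightarrow> black_typed f \<Longrightarrow> (f, g) \<in> AW_rels"
  by (auto simp: AS_rels_def R7_def R8_def R9_def trU_def trD_def idr_def black_typed_def)

lemma AS_eq_black_typed: "AS.eq f g \<Longrightarrow> black_typed f \<longleftrightarrow> black_typed g"
  by (drule AS.eqv_wft) (simp add: black_typed_def)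

lemma erase_red_respects_eq_black_typed:
  "AS.eq f g \<Longrightarrow> black_typed f \<Longrightarrow> AW.eq (erase_red f) (erase_red g)"
proof (induction rule: eqv.induct)
  case (refl f)
  then show ?case by (simp add: eqv.refl wft_erase_red)
next
  case (sym f g)
  then show ?case by (simp add: AS_eq_black_typed eqv.sym)
next
  case (trans f g h)
  then show ?case by (metis AS_eq_black_typed eqv.trans)
next
  case (cong_comp f f' g g')
  note f = AS.eqv_wft[OF cong_comp.hyps(1)] and g = AS.eqv_wft[OF cong_comp.hyps(2)]
  show ?case
  proof (cases "black_typed f")
    case True
    with cong_comp have "black_typed g" by (simp add: black_typed_def)
    with True cong_comp show ?thesis by (simp add: eqv.cong_comp)
  next
    case False
    have "AW.eq (erase_red (Comp f g)) (Zer (filter is_black (tdom g)) (filter is_black (tcod f)))"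
      "AW.eq (erase_red (Comp f' g')) (Zer (filter is_black (tdom g)) (filter is_black (tcod f)))"
      using erase_red_comp_eq_zero[of f g] erase_red_comp_eq_zero[of f' g'] False f g cong_comp.hyps(3)
      by (simp_all add: black_typed_def)
    then show ?thesis by (auto intro: eqv.trans eqv.sym)
  qed
next
  case (cong_tens f f' g g')
  then show ?case by (simp add: black_typed_def eqv.cong_tens)
next
  case (cong_add f f' g g')
  then show ?case using AS.eqv_wft[OF cong_add.hyps(1)] by (simp add: black_typed_def eqv.cong_add)
next
  case (cong_scal f f' c)
  then show ?case by (simp add: black_typed_def eqv.cong_scal)
next
  case (comp_id_l f)
  then show ?case using eqv.comp_id_l[of AWob AWgen "erase_red f" AW_rels]
    by (simp add: black_typed_def wft_erase_red)
next
  case (comp_id_r f)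
  then show ?case using eqv.comp_id_r[of AWob AWgen "erase_red f" AW_rels]
    by (simp add: black_typed_def wft_erase_red)
next
  case (tens_unit_l f)
  then show ?case using eqv.tens_unit_l[of AWob AWgen "erase_red f" AW_rels]
    by (simp add: black_typed_def wft_erase_red)
next
  case (tens_unit_r f)
  then show ?case using eqv.tens_unit_r[of AWob AWgen "erase_red f" AW_rels]
    by (simp add: black_typed_def wft_erase_red)
next
  case (tens_id a b)
  then show ?case by (simp add: black_typed_def eqv.tens_id)
next
  case (add_zero f)
  then show ?case using eqv.add_zero[of AWob AWgen "erase_red f" AW_rels]
    by (simp add: black_typed_def wft_erase_red)
next
  case (scal_zero f)
  then show ?case using eqv.scal_zero[of AWob AWgen "erase_red f" AW_rels]
    by (simp add: black_typed_def wft_erase_red)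
next
  case (rel f g)
  then have "(f, g) \<in> AW_rels" by (simp add: AS_rels_black_typed_imp_AW_rels)
  with rel show ?case
    by (metis erase_red_AW_rels_id eqv.rel wft_erase_red)
qed (auto simp: black_typed_def wft_erase_red intro!: eqv.comp_assoc eqv.tens_assoc eqv.interchange
  eqv.add_assoc eqv.add_comm eqv.scal_one eqv.scal_scal eqv.scal_add_l eqv.scal_add_r
  eqv.comp_add_l eqv.comp_add_r eqv.comp_scal_l eqv.comp_scal_r eqv.tens_add_l eqv.tens_add_r
  eqv.tens_scal_l eqv.tens_scal_r)

lemma erase_red_respects_eq:
  assumes fg: "AS.eq f g"
  shows "AW.eq (erase_red f) (erase_red g)"
proof (cases "black_typed f")
  case True
  with fg show ?thesis by (rule erase_red_respects_eq_black_typed)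
next
  case False
  note types = AS.eqv_wft[OF fg]
  have "AW.eq (erase_red f) (Zer (filter is_black (tdom f)) (filter is_black (tcod f)))"
    "AW.eq (erase_red g) (Zer (filter is_black (tdom f)) (filter is_black (tcod f)))"
    using erase_red_eq_zero[of f] erase_red_eq_zero[of g] types False
    by (simp_all add: black_typed_def)
  then show ?thesis by (blast intro: eqv.trans eqv.sym)
qed

lemma AW_eq_imp_AS_eq: "AW.eq f g \<Longrightarrow> AS.eq f g"
  using eqv_mono AWob_imp_ASob AWgen_imp_ASgen AW_rels_subset_AS_rels by metis

lemma AS_eq_erase_red: "wft ASob ASgen h \<Longrightarrow> black_typed h \<Longrightarrow> AS.eq (erase_red h) h"
proof (induction h)
  case (Comp f g)
  show ?case
  proof (cases "black_typed f")
    case True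
    with Comp show ?thesis by (simp add: black_typed_def eqv.cong_comp)
  next
    case False
    have "red_count (tdom g) \<noteq> red_count (tcod g)"
      using False Comp.prems red_count_eq_0_iff[of "tdom g"] red_count_eq_0_iff[of "tcod g"]
      by (auto simp: black_typed_def)
    then have "AS.eq g (Zer (tdom g) (tcod g))"
      using AS.eq_zero_if_red_count_differs[OF red_count_gdom_gcod] Comp.prems by auto
    then have h0: "AS.eq (Comp f g) (Zer (tdom g) (tcod f))"
      using AS.comp_zero_right[of g _ _ f] Comp.prems by simp
    have "AW.eq (erase_red (Comp f g)) (Zer (tdom g) (tcod f))"
      using erase_red_comp_eq_zero[of f g] False Comp.prems by (simp add: black_typed_def)
    then show ?thesis using AW_eq_imp_AS_eq h0 by (blast intro: eqv.trans eqv.sym)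
  qed
qed (auto simp: black_typed_def intro: eqv.refl eqv.cong_tens eqv.cong_add eqv.cong_scal)

theorem corollary3p16:
  shows "(\<forall>f g :: 'k::comm_ring_1 tm. wft AWob AWgen f \<longrightarrow> wft AWob AWgen g
            \<longrightarrow> AW_eq f g \<longrightarrow> AS_eq f g)
       \<and> (\<forall>f g :: 'k tm. wft AWob AWgen f \<longrightarrow> wft AWob AWgen g
            \<longrightarrow> tdom f = tdom g \<longrightarrow> tcod f = tcod g
            \<longrightarrow> AS_eq f g \<longrightarrow> AW_eq f g)
       \<and> (\<forall>h :: 'k tm. wft ASob ASgen h \<longrightarrow> list_all AWob (tdom h) \<longrightarrow> list_all AWob (tcod h)
            \<longrightarrow> (\<exists>f. wft AWob AWgen f \<and> tdom f = tdom h \<and> tcod f = tcod h \<and> AS_eq f h))"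
proof (intro conjI allI impI)
  show "AS_eq f g" if "AW_eq f g" for f g :: "'k tm"
    using that by (rule AW_eq_imp_AS_eq)
  show "AW_eq f g" if "wft AWob AWgen f" "wft AWob AWgen g" "AS_eq f g" for f g :: "'k tm"
    using erase_red_respects_eq[OF that(3)] by (simp add: erase_red_AW_id that(1,2))
  show "\<exists>f. wft AWob AWgen f \<and> tdom f = tdom h \<and> tcod f = tcod h \<and> AS_eq f h"
    if "wft ASob ASgen h" "list_all AWob (tdom h)" "list_all AWob (tcod h)" for h :: "'k tm"
    using that wft_erase_red AS_eq_erase_red
    by (intro exI[of _ "erase_red h"]) (auto simp: black_typed_def)
qed

end
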